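(* There exists a constant $C$, independent of $h$, $T$, the interface location and $\beta^\pm$, such that for every $T\in\mathcal T_h^i$ and every $v_h\in S_h(T)$, with polynomial components $v_h^\pm\in\mathbb Q_1$ regarded as functions on $\omega_T$, $$\|\beta^+\nabla v_h^+\cdot\bar{\mathbf n}-\beta^-\nabla v_h^-\cdot\bar{\mathbf n}\|_{L^2(\tau_{\omega_T})}\le C(\beta^+-\beta^-)h^{1/2}|v_h^s|_{H^2(\omega_T)}\quad\text{for } s=+ \text{ and for } s=-.$$
   Context: $\mathbb Q_1$ is the space of trilinear polynomials. $\Gamma$ is a closed $C^2$ surface separating a bounded domain $\Omega\subset\mathbb R^3$ (a union of finitely many rectangular parallelepipeds) into $\Omega^\pm$, with reach $r_\Gamma$ (largest $r$ such that normal segments of length $2r$ centered at distinct points of $\Gamma$ are disjoint); $\beta=\beta^\pm>0$ on $\Omega^\pm$ with $\beta^+\ge\beta^-$. $\mathcal T_h$ is a Cartesian mesh by cubes of edge length $h$ with $h<r_\Gamma/(3\sqrt3)$, $\Gamma$ meeting every mesh edge in at most one point and the boundary of every mesh face in at most two points, no vertex on $\Gamma$. $\mathcal T_h^i$ is the set of elements meeting $\Gamma$, $\omega_T$ the union of elements $T'$ with $\overline{T'}\cap\overline T\ne\emptyset$, $T^\pm=T\cap\Omega^\pm$. For $T\in\mathcal T_h^i$, $K_T$ is the triangle spanned by three points where $\Gamma$ meets edges of $T$, selected as: if $\Gamma$ cuts 3 faces, all three; if $\Gamma$ cuts 4 faces separating the endpoints of an edge $e$ from the other vertices, the three farthest from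 $e$; if the four points lie on four parallel edges, any three; if $\Gamma$ cuts 5 faces, the three on parallel edges; if $\Gamma$ cuts 6 faces, every other one of the six (on three mutually orthogonal edges). $\tau(T)$ is the plane of $K_T$, $\bar{\mathbf n}$ its unit normal, $F$ the centroid of $K_T$, $L(X)=(X-D)\cdot\bar{\mathbf n}$ with $D$ a vertex of $K_T$, $\tau_{\omega_T}=\omega_T\cap\tau(T)$. $\mathcal C_T(p)=p+\left(\frac{\beta^-}{\beta^+}-1\right)(\nabla p(F)\cdot\bar{\mathbf n})L$, and $S_h(T)$ consists of the functions $v_h$ with $v_h^-:=v_h|_{T^-}=p$ and $v_h^+:=v_h|_{T^+}=\mathcal C_T(p)$ for some $p\in\mathbb Q_1$. *)

theory Defs
  imports "HOL-Analysis.Analysis"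
begin

type_synonym pt = "real^3"

text \<open>A local C^2 chart of the interface: on the open set U, \<Gamma> is the zero set of a
  C^2 function phi with gradient g (nonvanishing), \<Omega>^- is where phi < 0, \<Omega>^+ where phi > 0.\<close>
definition C2_chart ::
  "pt set \<Rightarrow> pt set \<Rightarrow> pt set \<Rightarrow> pt set \<Rightarrow> (pt \<Rightarrow> real) \<Rightarrow> (pt \<Rightarrow> pt) \<Rightarrow> bool" where
  "C2_chart \<Gamma> Om Op U phi g \<longleftrightarrow>
     open U \<and>
     (\<exists>H :: pt \<Rightarrow> real^3^3.
        (\<forall>y\<in>U. (phi has_derivative (\<lambda>v. g y \<bullet> v)) (at y) \<and>
                 (g has_derivative (\<lambda>v. H y *v v)) (at y)) \<and>
        continuous_on U H) \<and>
     (\<forall>y\<in>U. g y \<noteq> 0) \<and>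
     \<Gamma> \<inter> U = {y\<in>U. phi y = 0} \<and>
     Om \<inter> U = {y\<in>U. phi y < 0} \<and>
     Op \<inter> U = {y\<in>U. phi y > 0}"

definition C2_surface :: "pt set \<Rightarrow> pt set \<Rightarrow> pt set \<Rightarrow> bool" where
  "C2_surface \<Gamma> Om Op \<longleftrightarrow>
     (\<forall>x\<in>\<Gamma>. \<exists>U phi g. x \<in> U \<and> C2_chart \<Gamma> Om Op U phi g)"

text \<open>unit normal of \<Gamma> at x (pointing towards \<Omega>^+)\<close>
definition unit_normal :: "pt set \<Rightarrow> pt set \<Rightarrow> pt set \<Rightarrow> pt \<Rightarrow> pt \<Rightarrow> bool" where
  "unit_normal \<Gamma> Om Op x nv \<longleftrightarrow>
     (\<exists>U phi g. x \<in> U \<and> C2_chart \<Gamma> Om Op U phi g \<and> nv = (1 / norm (g x)) *\<^sub>R g x)"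

definition interface :: "pt set \<Rightarrow> pt set \<Rightarrow> pt set \<Rightarrow> pt set \<Rightarrow> bool" where
  "interface \<Omega> \<Gamma> Om Op \<longleftrightarrow>
     \<Gamma> \<noteq> {} \<and> compact \<Gamma> \<and> \<Gamma> \<subseteq> \<Omega> \<and> C2_surface \<Gamma> Om Op \<and>
     open Om \<and> open Op \<and> Om \<noteq> {} \<and> Op \<noteq> {} \<and> Om \<inter> Op = {} \<and>
     \<Omega> - \<Gamma> = Om \<union> Op"

text \<open>r does not exceed the reach: open normal segments of length 2r centred at distinct
  points of \<Gamma> are disjoint.  The reach r_\<Gamma> is the supremum of such r.\<close>
definition reach_ok :: "pt set \<Rightarrow> pt set \<Rightarrow> pt set \<Rightarrow> real \<Rightarrow> bool" where
  "reach_ok \<Gamma> Om Op r \<longleftrightarrow> 0 < r \<and>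
     (\<forall>x y nx ny s t. x \<in> \<Gamma> \<and> y \<in> \<Gamma> \<and> x \<noteq> y \<and>
        unit_normal \<Gamma> Om Op x nx \<and> unit_normal \<Gamma> Om Op y ny \<and> \<bar>s\<bar> < r \<and> \<bar>t\<bar> < r
        \<longrightarrow> x + s *\<^sub>R nx \<noteq> y + t *\<^sub>R ny)"

definition cell :: "pt \<Rightarrow> real \<Rightarrow> pt set" where
  "cell a h = box a (a + h *\<^sub>R One)"

definition ccell :: "pt \<Rightarrow> real \<Rightarrow> pt set" where
  "ccell a h = cbox a (a + h *\<^sub>R One)"

definition cell_vertices :: "pt \<Rightarrow> real \<Rightarrow> pt set" where
  "cell_vertices a h = {a + h *\<^sub>R (\<chi> i. if i \<in> J then 1 else 0) | J. True}"

definition edge :: "pt \<Rightarrow> real \<Rightarrow> 3 \<Rightarrow> pt set" where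
  "edge v h i = closed_segment v (v + h *\<^sub>R axis i 1)"

definition cell_edges :: "pt \<Rightarrow> real \<Rightarrow> pt set set" where
  "cell_edges a h = {edge v h i | v i. v \<in> cell_vertices a h \<and> v $ i = a $ i}"

definition on_edge_dir :: "pt \<Rightarrow> real \<Rightarrow> 3 \<Rightarrow> pt \<Rightarrow> bool" where
  "on_edge_dir a h i x \<longleftrightarrow> (\<exists>v. v \<in> cell_vertices a h \<and> v $ i = a $ i \<and> x \<in> edge v h i)"

definition cell_faces :: "pt \<Rightarrow> real \<Rightarrow> pt set set" where
  "cell_faces a h = {{x \<in> ccell a h. x $ i = a $ i + c} | i c. c \<in> {0, h}}"

definition face_bdry :: "pt \<Rightarrow> real \<Rightarrow> pt set \<Rightarrow> pt set" where
  "face_bdry a h f = f \<inter> \<Union>(cell_edges a h)"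

text \<open>Cartesian mesh of \<Omega> by cubes of edge h on the grid org + h Z^3; A = lower corners.\<close>
definition cartesian_mesh :: "pt set \<Rightarrow> real \<Rightarrow> pt \<Rightarrow> pt set \<Rightarrow> bool" where
  "cartesian_mesh \<Omega> h org A \<longleftrightarrow> 0 < h \<and> finite A \<and> A \<noteq> {} \<and>
     (\<forall>a\<in>A. \<forall>i. \<exists>z::int. a $ i = org $ i + h * of_int z) \<and>
     \<Omega> = interior (\<Union>a\<in>A. ccell a h)"

definition mesh_interface_ok :: "pt set \<Rightarrow> real \<Rightarrow> pt set \<Rightarrow> bool" where
  "mesh_interface_ok \<Gamma> h A \<longleftrightarrow>
     (\<forall>a\<in>A. (\<forall>e\<in>cell_edges a h. finite (\<Gamma> \<inter> e) \<and> card (\<Gamma> \<inter> e) \<le> 1) \<and>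
             (\<forall>f\<in>cell_faces a h. finite (\<Gamma> \<inter> face_bdry a h f) \<and> card (\<Gamma> \<inter> face_bdry a h f) \<le> 2) \<and>
             cell_vertices a h \<inter> \<Gamma> = {})"

definition patch :: "pt set \<Rightarrow> real \<Rightarrow> pt \<Rightarrow> pt set" where
  "patch A h a = (\<Union>b\<in>{b\<in>A. ccell b h \<inter> ccell a h \<noteq> {}}. ccell b h)"

definition cut_points :: "pt set \<Rightarrow> pt \<Rightarrow> real \<Rightarrow> pt set" where
  "cut_points \<Gamma> a h = \<Gamma> \<inter> \<Union>(cell_edges a h)"

definition cut_faces :: "pt set \<Rightarrow> pt \<Rightarrow> real \<Rightarrow> pt set set" where
  "cut_faces \<Gamma> a h = {f \<in> cell_faces a h. \<Gamma> \<inter> face_bdry a h f \<noteq> {}}"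

text \<open>S is the vertex set of K_T, selected according to the number of faces cut by \<Gamma>.\<close>
definition K_select :: "pt set \<Rightarrow> pt set \<Rightarrow> pt \<Rightarrow> real \<Rightarrow> pt set \<Rightarrow> bool" where
  "K_select \<Gamma> Om a h S \<longleftrightarrow>
     (let P = cut_points \<Gamma> a h; m = card (cut_faces \<Gamma> a h) in
      S \<subseteq> P \<and> card S = 3 \<and>
      ((m = 3 \<and> S = P) \<or>
       (m = 4 \<and>
          ((\<exists>v i. v \<in> cell_vertices a h \<and> v $ i = a $ i \<and>
              ({u \<in> cell_vertices a h. u \<in> Om} = {v, v + h *\<^sub>R axis i 1} \<or>
               {u \<in> cell_vertices a h. u \<notin> Om} = {v, v + h *\<^sub>R axis i 1}) \<and>
              (\<forall>x\<in>S. \<forall>y\<in>P - S. infdist y (edge v h i) \<le> infdist x (edge v h i)))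
           \<or> (\<exists>i. \<forall>x\<in>P. on_edge_dir a h i x))) \<or>
       (m = 5 \<and> (\<exists>i. S = {x \<in> P. on_edge_dir a h i x})) \<or>
       (m = 6 \<and>
          (\<forall>x\<in>S. \<forall>y\<in>S. x \<noteq> y \<longrightarrow> \<not> (\<exists>f\<in>cell_faces a h. x \<in> f \<and> y \<in> f)) \<and>
          (\<forall>x\<in>S. \<forall>y\<in>S. x \<noteq> y \<longrightarrow> \<not> (\<exists>i. on_edge_dir a h i x \<and> on_edge_dir a h i y)))))"

definition Q1 :: "(pt \<Rightarrow> real) set" where
  "Q1 = {p. \<exists>c :: nat \<Rightarrow> nat \<Rightarrow> nat \<Rightarrow> real. \<forall>x.
           p x = (\<Sum>i\<in>{0,1}. \<Sum>j\<in>{0,1}. \<Sum>k\<in>{0,1}.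
                    c i j k * (x $ 1) ^ i * (x $ 2) ^ j * (x $ 3) ^ k)}"

definition partial :: "3 \<Rightarrow> (pt \<Rightarrow> real) \<Rightarrow> pt \<Rightarrow> real" where
  "partial i f x = frechet_derivative f (at x) (axis i 1)"

definition grad :: "(pt \<Rightarrow> real) \<Rightarrow> pt \<Rightarrow> pt" where
  "grad f x = (\<chi> i. partial i f x)"

definition H2_semi :: "pt set \<Rightarrow> (pt \<Rightarrow> real) \<Rightarrow> real" where
  "H2_semi W f = sqrt (integral W (\<lambda>x. \<Sum>i\<in>UNIV. \<Sum>j\<in>UNIV. (partial i (partial j f) x)\<^sup>2))"

definition onb_perp :: "pt \<Rightarrow> pt \<times> pt" where
  "onb_perp n = (SOME uw. norm (fst uw) = 1 \<and> norm (snd uw) = 1 \<and> fst uw \<bullet> snd uw = 0 \<and>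
                          fst uw \<bullet> n = 0 \<and> snd uw \<bullet> n = 0)"

text \<open>L^2 norm of f on (W \<inter> plane through D with unit normal n), w.r.t. surface measure,
  computed through an isometric parametrisation of the plane.\<close>
definition L2_plane :: "pt set \<Rightarrow> pt \<Rightarrow> pt \<Rightarrow> (pt \<Rightarrow> real) \<Rightarrow> real" where
  "L2_plane W D n f =
     (let u = fst (onb_perp n); w = snd (onb_perp n);
          X = (\<lambda>st::real \<times> real. D + fst st *\<^sub>R u + snd st *\<^sub>R w)
      in sqrt (integral {st. X st \<in> W} (\<lambda>st. (f (X st))\<^sup>2)))"

definition C_T :: "real \<Rightarrow> real \<Rightarrow> pt \<Rightarrow> pt \<Rightarrow> pt \<Rightarrow> (pt \<Rightarrow> real) \<Rightarrow> pt \<Rightarrow> real" where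
  "C_T bm bp F n D p = (\<lambda>X. p X + (bm / bp - 1) * (grad p F \<bullet> n) * ((X - D) \<bullet> n))"

end

theory Submission
  imports Defs
begin

(* The correction C_T adds to p an affine function whose normal derivative is the constant
   (beta^-/beta^+ - 1) grad p(F) . n, so the flux jump equals (beta^+ - beta^-) (grad p(X) - grad p(F)) . n,
   and v_h^+ and v_h^- have the same Hessian, hence the same H^2 seminorm.
   For trilinear p the only nonzero second derivatives are the mixed ones d_i d_j p, each affine in the
   remaining coordinate.  On the patch, whose points lie within O(h) of the cell T, the jump is thus
   bounded by h times the sum M of the maxima of |d_i d_j p| over T, and the plane section of the patch
   has diameter O(h); so the L^2 norm of the jump is O((beta^+ - beta^-) h^2 M).  Conversely, an affine
   function stays above half of its maximum on a quarter of the interval, so |p|^2_{H^2(T)} >= c h^3 M^2,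
   which yields the factor h^(1/2). *)

section \<open>The correction operator\<close>

lemma partial_add_const: "partial i (\<lambda>x. f x + c) = partial i f"
proof
  fix x
  have "((\<lambda>x. f x + c) has_derivative f') (at x) \<longleftrightarrow> (f has_derivative f') (at x)" for f'
    using has_derivative_add_const[of f f' "at x" c]
      has_derivative_add_const[of "\<lambda>x. f x + c" f' "at x" "- c"] by auto
  then show "partial i (\<lambda>x. f x + c) x = partial i f x"
    unfolding partial_def frechet_derivative_def by simp
qed

lemma partial_add_normal_affine:
  assumes "f differentiable (at x)"
  shows "partial i (\<lambda>X. f X + c * ((X - D) \<bullet> n)) x = partial i f x + c * n $ i"
proof -
  have "((\<lambda>X. f X + c * ((X - D) \<bullet> n)) has_derivative
          (\<lambda>v. frechet_derivative f (at x) v + c * (v \<bullet> n))) (at x)"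
    using assms unfolding frechet_derivative_works by (auto intro!: derivative_eq_intros)
  then show ?thesis
    unfolding partial_def by (simp add: frechet_derivative_at[symmetric] inner_axis' inner_axis inner_commute)
qed

lemma grad_C_T:
  assumes "f differentiable (at X)"
  shows "grad (C_T bm bp F n D f) X = grad f X + ((bm / bp - 1) * (grad f F \<bullet> n)) *\<^sub>R n"
proof -
  have "partial i (C_T bm bp F n D f) X = partial i f X + (bm / bp - 1) * (grad f F \<bullet> n) * n $ i"
    for i unfolding C_T_def by (rule partial_add_normal_affine[OF assms])
  then show ?thesis
    unfolding grad_def[of "C_T bm bp F n D f"] by (simp add: vec_eq_iff grad_def)
qed

lemma flux_jump_C_T:
  assumes "f differentiable (at X)" and "norm n = 1" and "bp \<noteq> 0"
  shows "bp * (grad (C_T bm bp F n D f) X \<bullet> n) - bm * (grad f X \<bullet> n)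
           = (bp - bm) * (grad f X \<bullet> n - grad f F \<bullet> n)"
proof -
  have "n \<bullet> n = 1" using assms(2) by (simp add: dot_square_norm)
  then show ?thesis
    using assms(3) by (simp add: grad_C_T[OF assms(1)] inner_add_left field_simps)
qed

lemma H2_semi_C_T:
  assumes "\<And>x. f differentiable (at x)"
  shows "H2_semi W (C_T bm bp F n D f) = H2_semi W f"
proof -
  have "partial j (C_T bm bp F n D f) = (\<lambda>X. partial j f X + (bm / bp - 1) * (grad f F \<bullet> n) * n $ j)"
    for j unfolding C_T_def by (rule ext) (rule partial_add_normal_affine[OF assms])
  then show ?thesis
    unfolding H2_semi_def by (simp add: partial_add_const)
qed

section \<open>Trilinear polynomials\<close>

definition trilinear :: "(nat \<Rightarrow> real) \<Rightarrow> real^3 \<Rightarrow> real" where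
  "trilinear k x = k 0 + k 1 * x$1 + k 2 * x$2 + k 3 * x$3
     + k 4 * x$1 * x$2 + k 5 * x$1 * x$3 + k 6 * x$2 * x$3 + k 7 * x$1 * x$2 * x$3"

definition partial_coeffs :: "3 \<Rightarrow> (nat \<Rightarrow> real) \<Rightarrow> nat \<Rightarrow> real" where
  "partial_coeffs i k = (!)
     (if i = 1 then [k 1, 0, k 4, k 5, 0, 0, k 7, 0]
      else if i = 2 then [k 2, k 4, 0, k 6, 0, k 7, 0, 0]
      else [k 3, k 5, k 6, 0, k 7, 0, 0, 0])"

lemma Q1_trilinear:
  assumes "p \<in> Q1"
  obtains k where "p = trilinear k"
proof -
  from assms obtain c where c: "\<And>x. p x = (\<Sum>i\<in>{0,1}. \<Sum>j\<in>{0,1}. \<Sum>k\<in>{0,1}.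
      c i j k * (x $ 1) ^ i * (x $ 2) ^ j * (x $ 3) ^ k)"
    unfolding Q1_def by blast
  have "p = trilinear ((!) [c 0 0 0, c 1 0 0, c 0 1 0, c 0 0 1, c 1 1 0, c 1 0 1, c 0 1 1, c 1 1 1])"
    by (rule ext) (simp add: c trilinear_def algebra_simps)
  then show ?thesis by (rule that)
qed

lemma has_derivative_trilinear:
  "(trilinear k has_derivative (\<lambda>v. v \<bullet> (\<chi> i. trilinear (partial_coeffs i k) x))) (at x)"
  unfolding trilinear_def[abs_def]
  by (rule has_derivative_eq_rhs)
    (auto intro!: derivative_eq_intros bounded_linear.has_derivative[OF bounded_linear_vec_nth]
      simp: inner_vec_def sum_3 partial_coeffs_def algebra_simps)

lemma differentiable_trilinear: "trilinear k differentiable (at x)"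
  using has_derivative_trilinear by (rule differentiableI)

lemma differentiable_Q1: "p \<in> Q1 \<Longrightarrow> p differentiable (at x)"
  by (metis Q1_trilinear differentiable_trilinear)

lemma partial_trilinear: "partial i (trilinear k) = trilinear (partial_coeffs i k)"
  by (rule ext) (simp add: partial_def frechet_derivative_at[OF has_derivative_trilinear, symmetric]
      inner_axis')

lemma H2_integrand_trilinear:
  "(\<Sum>i\<in>UNIV. \<Sum>j\<in>UNIV. (partial i (partial j (trilinear k)) x)\<^sup>2)
     = 2 * ((k 4 + k 7 * x$3)\<^sup>2 + (k 5 + k 7 * x$2)\<^sup>2 + (k 6 + k 7 * x$1)\<^sup>2)"
  by (simp add: partial_trilinear sum_3 trilinear_def partial_coeffs_def)

section \<open>Affine functions on an interval\<close>

definition affine_endpoint_max :: "real \<Rightarrow> real \<Rightarrow> real \<Rightarrow> real \<Rightarrow> real" where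
  "affine_endpoint_max \<alpha> \<beta> t h = max \<bar>\<alpha> + \<beta> * t\<bar> \<bar>\<alpha> + \<beta> * (t + h)\<bar>"

lemma affine_endpoint_max_nonneg: "0 \<le> affine_endpoint_max \<alpha> \<beta> t h"
  by (simp add: affine_endpoint_max_def)

lemma abs_affine_le_endpoint_max:
  assumes "h > 0" and "t - h \<le> s" and "s \<le> t + 2 * h"
  shows "\<bar>\<alpha> + \<beta> * s\<bar> \<le> 3 * affine_endpoint_max \<alpha> \<beta> t h"
proof -
  define \<theta> where "\<theta> = (s - t) / h"
  define M where "M = affine_endpoint_max \<alpha> \<beta> t h"
  have "-1 \<le> \<theta>" "\<theta> \<le> 2" unfolding \<theta>_def using assms by (simp_all add: field_simps)
  then have weights: "\<bar>1 - \<theta>\<bar> + \<bar>\<theta>\<bar> \<le> 3" by auto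
  have "\<alpha> + \<beta> * s = (1 - \<theta>) * (\<alpha> + \<beta> * t) + \<theta> * (\<alpha> + \<beta> * (t + h))"
    unfolding \<theta>_def using assms(1) by (simp add: field_simps)
  also have "\<bar>\<dots>\<bar> \<le> \<bar>1 - \<theta>\<bar> * M + \<bar>\<theta>\<bar> * M"
    unfolding M_def affine_endpoint_max_def
    by (rule order_trans[OF abs_triangle_ineq add_mono]) (simp_all add: abs_mult mult_left_mono)
  also have "\<dots> = (\<bar>1 - \<theta>\<bar> + \<bar>\<theta>\<bar>) * M" by (simp add: distrib_right)
  also have "\<dots> \<le> 3 * M"
    using weights affine_endpoint_max_nonneg unfolding M_def by (rule mult_right_mono)
  finally show ?thesis unfolding M_def .
qed

text \<open>An affine function stays above half its maximum on the quarter of the interval next to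
  the endpoint where the maximum is attained, because its total variation is at most twice the
  maximum.\<close>
lemma abs_affine_ge_half_endpoint_max:
  assumes "h > 0"
  obtains c where "t \<le> c" and "c + h / 4 \<le> t + h"
    and "\<And>s. c \<le> s \<Longrightarrow> s \<le> c + h / 4 \<Longrightarrow> affine_endpoint_max \<alpha> \<beta> t h / 2 \<le> \<bar>\<alpha> + \<beta> * s\<bar>"
proof -
  define M where "M = affine_endpoint_max \<alpha> \<beta> t h"
  obtain e where e: "e = t \<or> e = t + h" and Me: "\<bar>\<alpha> + \<beta> * e\<bar> = M"
    unfolding M_def affine_endpoint_max_def by (metis max_def)
  have slope: "\<bar>\<beta>\<bar> * h \<le> 2 * M"
  proof -
    have "\<bar>\<beta>\<bar> * h = \<bar>(\<alpha> + \<beta> * (t + h)) - (\<alpha> + \<beta> * t)\<bar>"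
      using assms by (simp add: algebra_simps abs_mult)
    also have "\<dots> \<le> \<bar>\<alpha> + \<beta> * (t + h)\<bar> + \<bar>\<alpha> + \<beta> * t\<bar>" by (rule abs_triangle_ineq4)
    also have "\<dots> \<le> 2 * M" unfolding M_def affine_endpoint_max_def by (simp add: max_def)
    finally show ?thesis .
  qed
  define c where "c = (if e = t then t else t + 3 * h / 4)"
  show ?thesis
  proof (rule that[of c])
    show "t \<le> c" "c + h / 4 \<le> t + h" unfolding c_def using assms by auto
    fix s assume s: "c \<le> s" "s \<le> c + h / 4"
    have "\<bar>s - e\<bar> \<le> h / 4" using s e assms unfolding c_def by (auto split: if_splits)
    then have "\<bar>\<beta>\<bar> * \<bar>s - e\<bar> \<le> \<bar>\<beta>\<bar> * (h / 4)" by (rule mult_left_mono) simp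
    then have "\<bar>\<beta> * (s - e)\<bar> \<le> M / 2" using slope by (simp add: abs_mult)
    moreover have "\<alpha> + \<beta> * s = (\<alpha> + \<beta> * e) + \<beta> * (s - e)" by (simp add: algebra_simps)
    ultimately show "affine_endpoint_max \<alpha> \<beta> t h / 2 \<le> \<bar>\<alpha> + \<beta> * s\<bar>"
      using Me unfolding M_def by linarith
  qed
qed

lemma integral_cube_affine_square_ge:
  fixes a :: "real^'n"
  assumes "h > 0"
  shows "(affine_endpoint_max \<alpha> \<beta> (a$k) h)\<^sup>2 * h ^ CARD('n) / 16
           \<le> integral (cbox a (a + h *\<^sub>R One)) (\<lambda>x. (\<alpha> + \<beta> * x$k)\<^sup>2)"
proof -
  define M where "M = affine_endpoint_max \<alpha> \<beta> (a$k) h"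
  obtain c where c: "a$k \<le> c" "c + h / 4 \<le> a$k + h"
    and above: "\<And>s. c \<le> s \<Longrightarrow> s \<le> c + h / 4 \<Longrightarrow> M / 2 \<le> \<bar>\<alpha> + \<beta> * s\<bar>"
    using abs_affine_ge_half_endpoint_max[OF assms] unfolding M_def by metis
  define lo :: "real^'n" where "lo = (\<chi> i. if i = k then c else a$i)"
  define hi :: "real^'n" where "hi = (\<chi> i. if i = k then c + h / 4 else a$i + h)"
  have sub: "cbox lo hi \<subseteq> cbox a (a + h *\<^sub>R One)"
  proof
    fix x assume "x \<in> cbox lo hi"
    then have x: "lo$i \<le> x$i \<and> x$i \<le> hi$i" for i by (simp add: mem_box_cart)
    have "a$i \<le> x$i \<and> x$i \<le> a$i + h" for i
      using x[of i] c by (cases "i = k") (auto simp: lo_def hi_def)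
    then show "x \<in> cbox a (a + h *\<^sub>R One)" by (simp add: mem_box_cart flip: Cart_1)
  qed
  have "Henstock_Kurzweil_Integration.content (cbox lo hi) = (\<Prod>i\<in>UNIV. hi$i - lo$i)"
    using assms by (intro content_cbox_cart) (simp add: lo_def hi_def interval_ne_empty_cart)
  also have "\<dots> = (h / 4) * (\<Prod>i\<in>UNIV - {k}. h)"
    by (subst prod.remove[of _ k]) (simp_all add: lo_def hi_def)
  also have "\<dots> = h ^ CARD('n) / 4"
    by (simp add: card_Diff_singleton power_eq_if)
  finally have content: "Henstock_Kurzweil_Integration.content (cbox lo hi) = h ^ CARD('n) / 4" .
  have "integral (cbox lo hi) (\<lambda>x. (M / 2)\<^sup>2) \<le> integral (cbox lo hi) (\<lambda>x. (\<alpha> + \<beta> * x$k)\<^sup>2)"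
  proof (rule integral_le)
    fix x assume "x \<in> cbox lo hi"
    then have "M / 2 \<le> \<bar>\<alpha> + \<beta> * x$k\<bar>"
      by (intro above) (auto simp: mem_box_cart lo_def hi_def dest: spec[of _ k])
    then show "(M / 2)\<^sup>2 \<le> (\<alpha> + \<beta> * x$k)\<^sup>2"
      using affine_endpoint_max_nonneg[of \<alpha> \<beta> "a$k" h] unfolding M_def
      by (metis abs_le_square_iff abs_of_nonneg divide_nonneg_pos zero_less_numeral order_trans)
  qed (auto intro!: integrable_continuous continuous_intros)
  also have "\<dots> \<le> integral (cbox a (a + h *\<^sub>R One)) (\<lambda>x. (\<alpha> + \<beta> * x$k)\<^sup>2)"
    by (rule integral_subset_le[OF sub]) (auto intro!: integrable_continuous continuous_intros)
  finally show ?thesis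
    unfolding M_def[symmetric] using content by (simp add: power_divide field_simps mult.commute)
qed

lemma mem_ccell: "x \<in> ccell a h \<longleftrightarrow> (\<forall>i. a$i \<le> x$i \<and> x$i \<le> a$i + h)"
  by (simp add: ccell_def mem_box_cart flip: Cart_1)

lemma patch_component_bounds:
  assumes "X \<in> patch A h a"
  shows "a$i - h \<le> X$i \<and> X$i \<le> a$i + 2 * h"
proof -
  from assms obtain b y where "X \<in> ccell b h" "y \<in> ccell b h" "y \<in> ccell a h"
    unfolding patch_def by blast
  then have "b$i \<le> X$i" "X$i \<le> b$i + h" "b$i \<le> y$i" "y$i \<le> b$i + h" "a$i \<le> y$i" "y$i \<le> a$i + h"
    unfolding mem_ccell by blast+
  then show ?thesis by linarith
qed

lemma patch_dist_le:
  assumes "X \<in> patch A h a" and "D \<in> ccell a h"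
  shows "norm (X - D) \<le> 6 * h"
proof -
  have "\<bar>(X - D)$i\<bar> \<le> 2 * h" for i
    using patch_component_bounds[OF assms(1), of i] assms(2)[unfolded mem_ccell, rule_format, of i]
    by auto
  from this[of 1] this[of 2] this[of 3] show ?thesis
    using norm_le_l1_cart[of "X - D"] unfolding sum_3 by linarith
qed

lemma ccell_subset_patch:
  assumes "a \<in> A" and "0 \<le> h"
  shows "ccell a h \<subseteq> patch A h a"
proof -
  have "a \<in> ccell a h" using assms(2) by (simp add: mem_ccell)
  then show ?thesis unfolding patch_def using assms(1) by blast
qed

lemma compact_patch: "finite A \<Longrightarrow> compact (patch A h a)"
  unfolding patch_def ccell_def by (intro compact_UN) auto

lemma cell_edge_subset_ccell:
  assumes "0 \<le> h" and "e \<in> cell_edges a h"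
  shows "e \<subseteq> ccell a h"
proof -
  obtain v i J where e: "e = edge v h i" and v: "v = a + h *\<^sub>R (\<chi> j. if j \<in> J then 1 else 0)"
    and vi: "v$i = a$i"
    using assms(2) unfolding cell_edges_def cell_vertices_def by blast
  have vj: "a$j \<le> v$j \<and> v$j \<le> a$j + h" for j using assms(1) by (simp add: v)
  then have "v \<in> ccell a h" "v + h *\<^sub>R axis i 1 \<in> ccell a h"
    using vi assms(1) by (auto simp: mem_ccell axis_def)
  then show ?thesis
    unfolding e edge_def by (intro closed_segment_subset) (simp_all add: ccell_def)
qed

lemma cut_points_subset_ccell: "0 \<le> h \<Longrightarrow> cut_points \<Gamma> a h \<subseteq> ccell a h"
  unfolding cut_points_def using cell_edge_subset_ccell by blast

lemma centroid_mem_convex: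
  fixes C :: "'a::real_vector set"
  assumes "convex C" and "S \<subseteq> C" and "finite S" and "S \<noteq> {}"
  shows "(1 / real (card S)) *\<^sub>R sum id S \<in> C"
proof -
  have "(\<Sum>x\<in>S. (1 / real (card S)) *\<^sub>R x) \<in> C"
    using assms by (intro convex_sum) auto
  then show ?thesis by (simp add: scaleR_sum_right)
qed

text \<open>The mixed second partials \<open>\<partial>\<^sub>1\<partial>\<^sub>2, \<partial>\<^sub>1\<partial>\<^sub>3, \<partial>\<^sub>2\<partial>\<^sub>3\<close> of \<^term>\<open>trilinear k\<close> are
  \<open>k 4 + k 7 * x$3\<close>, \<open>k 5 + k 7 * x$2\<close> and \<open>k 6 + k 7 * x$1\<close>; this is the sum of their maxima
  over the cell with corner \<open>a\<close>.\<close>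
definition mixed_partials_max :: "(nat \<Rightarrow> real) \<Rightarrow> real^3 \<Rightarrow> real \<Rightarrow> real" where
  "mixed_partials_max k a h = affine_endpoint_max (k 4) (k 7) (a$3) h
     + affine_endpoint_max (k 5) (k 7) (a$2) h + affine_endpoint_max (k 6) (k 7) (a$1) h"

lemma mixed_partials_max_nonneg: "0 \<le> mixed_partials_max k a h"
  by (simp add: mixed_partials_max_def affine_endpoint_max_nonneg add_nonneg_nonneg)

lemma trilinear_partial_diff:
  "partial 1 (trilinear k) X - partial 1 (trilinear k) F
     = (X$2 - F$2) * (k 4 + k 7 * X$3) + (X$3 - F$3) * (k 5 + k 7 * F$2)"
  "partial 2 (trilinear k) X - partial 2 (trilinear k) F
     = (X$1 - F$1) * (k 4 + k 7 * X$3) + (X$3 - F$3) * (k 6 + k 7 * F$1)"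
  "partial 3 (trilinear k) X - partial 3 (trilinear k) F
     = (X$1 - F$1) * (k 5 + k 7 * X$2) + (X$2 - F$2) * (k 6 + k 7 * F$1)"
  by (simp_all add: partial_trilinear trilinear_def partial_coeffs_def algebra_simps)

lemma trilinear_grad_inner_diff_le:
  assumes h: "h > 0" and F: "F \<in> ccell a h"
    and X: "\<And>i. a$i - h \<le> X$i \<and> X$i \<le> a$i + 2 * h" and n: "norm n = 1"
  shows "\<bar>grad (trilinear k) X \<bullet> n - grad (trilinear k) F \<bullet> n\<bar> \<le> 12 * h * mixed_partials_max k a h"
proof -
  define M12 where "M12 = affine_endpoint_max (k 4) (k 7) (a$3) h"
  define M13 where "M13 = affine_endpoint_max (k 5) (k 7) (a$2) h"
  define M23 where "M23 = affine_endpoint_max (k 6) (k 7) (a$1) h"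
  have F': "a$i \<le> F$i \<and> F$i \<le> a$i + h" for i
    using F by (simp add: mem_ccell)
  have near: "a$i - h \<le> Y$i \<and> Y$i \<le> a$i + 2 * h" if "Y = X \<or> Y = F" for Y i
    using that X[of i] F'[of i] h by auto
  have mixed: "\<bar>k 4 + k 7 * Y$3\<bar> \<le> 3 * M12" "\<bar>k 5 + k 7 * Y$2\<bar> \<le> 3 * M13"
    "\<bar>k 6 + k 7 * Y$1\<bar> \<le> 3 * M23" if "Y = X \<or> Y = F" for Y
    unfolding M12_def M13_def M23_def using near[OF that] by (auto intro!: abs_affine_le_endpoint_max h)
  have dist: "\<bar>X$i - F$i\<bar> \<le> 2 * h" for i using X[of i] F'[of i] by auto
  have prod: "\<bar>(X$i - F$i) * m\<bar> \<le> 2 * h * (3 * M)" if "\<bar>m\<bar> \<le> 3 * M" for i m M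
    unfolding abs_mult using that dist[of i] h by (intro mult_mono) auto
  define d where "d i = partial i (trilinear k) X - partial i (trilinear k) F" for i
  have bounds: "\<bar>d 1\<bar> \<le> 2 * h * (3 * M12) + 2 * h * (3 * M13)"
    "\<bar>d 2\<bar> \<le> 2 * h * (3 * M12) + 2 * h * (3 * M23)"
    "\<bar>d 3\<bar> \<le> 2 * h * (3 * M13) + 2 * h * (3 * M23)"
    unfolding d_def trilinear_partial_diff
    by (intro order_trans[OF abs_triangle_ineq add_mono] prod mixed; simp)+
  have "\<bar>grad (trilinear k) X \<bullet> n - grad (trilinear k) F \<bullet> n\<bar>
      = \<bar>(grad (trilinear k) X - grad (trilinear k) F) \<bullet> n\<bar>"
    by (simp add: inner_diff_left)
  also have "\<dots> \<le> norm (grad (trilinear k) X - grad (trilinear k) F)"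
    using Cauchy_Schwarz_ineq2 n by (metis mult.right_neutral)
  also have "\<dots> \<le> \<bar>d 1\<bar> + \<bar>d 2\<bar> + \<bar>d 3\<bar>"
    using norm_le_l1_cart[of "grad (trilinear k) X - grad (trilinear k) F"]
    by (simp add: d_def grad_def sum_3)
  also have "\<dots> \<le> 2 * h * (3 * M12) + 2 * h * (3 * M13) + (2 * h * (3 * M12) + 2 * h * (3 * M23))
      + (2 * h * (3 * M13) + 2 * h * (3 * M23))"
    using bounds by (intro add_mono)
  also have "\<dots> = 12 * h * mixed_partials_max k a h"
    by (simp add: mixed_partials_max_def M12_def M13_def M23_def algebra_simps)
  finally show ?thesis .
qed

lemma integrable_continuous_compact:
  fixes f :: "'a::euclidean_space \<Rightarrow> real"
  assumes "compact S" and "continuous_on S f"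
  shows "f integrable_on S"
proof -
  have "(\<lambda>x. indicator S x *\<^sub>R f x) integrable_on UNIV"
    using has_integral_integral_lborel[OF borel_integrable_compact[OF assms]] by blast
  moreover have "(\<lambda>x. indicator S x *\<^sub>R f x) = (\<lambda>x. if x \<in> S then f x else 0)"
    by (auto simp: indicator_def)
  ultimately show ?thesis
    by (simp add: integrable_restrict_UNIV)
qed

lemma H2_integral_trilinear_ge:
  assumes h: "h > 0" and W: "compact W" "ccell a h \<subseteq> W"
  shows "h ^ 3 * (mixed_partials_max k a h)\<^sup>2
           \<le> 24 * integral W (\<lambda>x. \<Sum>i\<in>UNIV. \<Sum>j\<in>UNIV. (partial i (partial j (trilinear k)) x)\<^sup>2)"
proof -
  define M12 where "M12 = affine_endpoint_max (k 4) (k 7) (a$3) h"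
  define M13 where "M13 = affine_endpoint_max (k 5) (k 7) (a$2) h"
  define M23 where "M23 = affine_endpoint_max (k 6) (k 7) (a$1) h"
  define q where "q x = 2 * ((k 4 + k 7 * x$3)\<^sup>2 + (k 5 + k 7 * x$2)\<^sup>2 + (k 6 + k 7 * x$1)\<^sup>2)" for x :: "real^3"
  have cont: "continuous_on U q" for U unfolding q_def by (intro continuous_intros)
  have "h ^ 3 * (M12\<^sup>2 + M13\<^sup>2 + M23\<^sup>2) / 8
      = 2 * (M12\<^sup>2 * h ^ CARD(3) / 16 + M13\<^sup>2 * h ^ CARD(3) / 16 + M23\<^sup>2 * h ^ CARD(3) / 16)"
    by (simp add: algebra_simps power3_eq_cube)
  also have "\<dots> \<le> 2 * (integral (ccell a h) (\<lambda>x. (k 4 + k 7 * x$3)\<^sup>2)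
      + integral (ccell a h) (\<lambda>x. (k 5 + k 7 * x$2)\<^sup>2) + integral (ccell a h) (\<lambda>x. (k 6 + k 7 * x$1)\<^sup>2))"
    unfolding M12_def M13_def M23_def ccell_def
    by (intro mult_left_mono add_mono integral_cube_affine_square_ge h) simp
  also have "\<dots> = integral (ccell a h) q"
    unfolding q_def ccell_def
    by (simp add: integral_add integral_mult_right integrable_continuous continuous_intros)
  also have "\<dots> \<le> integral W q"
    using W cont by (intro integral_subset_le integrable_continuous_compact)
      (auto simp: q_def ccell_def intro: integrable_continuous)
  finally have "h ^ 3 * (M12\<^sup>2 + M13\<^sup>2 + M23\<^sup>2) \<le> 8 * integral W q" by simp
  moreover have "(M12 + M13 + M23)\<^sup>2 \<le> 3 * (M12\<^sup>2 + M13\<^sup>2 + M23\<^sup>2)"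
  proof -
    have "3 * (M12\<^sup>2 + M13\<^sup>2 + M23\<^sup>2) - (M12 + M13 + M23)\<^sup>2
        = (M12 - M13)\<^sup>2 + (M12 - M23)\<^sup>2 + (M13 - M23)\<^sup>2"
      by (simp add: power2_eq_square algebra_simps)
    then show ?thesis by (smt (verit) zero_le_power2)
  qed
  then have "h ^ 3 * (M12 + M13 + M23)\<^sup>2 \<le> 3 * (h ^ 3 * (M12\<^sup>2 + M13\<^sup>2 + M23\<^sup>2))"
    using h by (simp add: mult_left_mono)
  ultimately show ?thesis
    unfolding mixed_partials_max_def M12_def[symmetric] M13_def[symmetric] M23_def[symmetric]
      H2_integrand_trilinear q_def[symmetric]
    by linarith
qed

lemma mixed_partials_max_le_H2_semi:
  assumes h: "h > 0" and W: "compact W" "ccell a h \<subseteq> W"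
  shows "h\<^sup>2 * mixed_partials_max k a h \<le> 5 * sqrt h * H2_semi W (trilinear k)"
proof -
  define M where "M = mixed_partials_max k a h"
  define I where "I = integral W (\<lambda>x. \<Sum>i\<in>UNIV. \<Sum>j\<in>UNIV. (partial i (partial j (trilinear k)) x)\<^sup>2)"
  have H2: "h ^ 3 * M\<^sup>2 \<le> 24 * I"
    unfolding M_def I_def by (rule H2_integral_trilinear_ge[OF h W])
  moreover have "0 \<le> h ^ 3 * M\<^sup>2" using h by simp
  ultimately have "0 \<le> I" by linarith
  have "(h\<^sup>2 * M)\<^sup>2 = h * (h ^ 3 * M\<^sup>2)" by (simp add: power2_eq_square power3_eq_cube)
  also have "\<dots> \<le> h * (25 * I)" using H2 \<open>0 \<le> I\<close> h by (intro mult_left_mono) auto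
  also have "\<dots> = (5 * sqrt h * sqrt I)\<^sup>2" using h \<open>0 \<le> I\<close> by (simp add: power_mult_distrib)
  finally have "h\<^sup>2 * M \<le> 5 * sqrt h * sqrt I"
    by (rule power2_le_imp_le) (use \<open>0 \<le> I\<close> h in simp)
  then show ?thesis unfolding M_def I_def H2_semi_def .
qed

section \<open>L2 norms on planes\<close>

lemma orthonormal_pair_orthogonal_to:
  fixes n :: "real^3"
  assumes "norm n = 1"
  obtains u w where "norm u = 1" "norm w = 1" "u \<bullet> w = 0" "u \<bullet> n = 0" "w \<bullet> n = 0"
proof -
  obtain B where B: "n \<in> B" "pairwise orthogonal B" "\<And>x. x \<in> B \<Longrightarrow> norm x = 1"
    "card B = DIM(real^3)"
    using vector_in_orthonormal_basis[OF assms] by metis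
  then have "card (B - {n}) = 2" by (simp add: card_Diff_singleton)
  then obtain u w where uw: "B - {n} = {u, w}" "u \<noteq> w" by (auto simp: card_2_iff)
  then have "u \<in> B" "w \<in> B" "u \<noteq> n" "w \<noteq> n" by blast+
  then show ?thesis
  proof (intro that)
    show "norm u = 1" "norm w = 1" using B(3) \<open>u \<in> B\<close> \<open>w \<in> B\<close> by blast+
    show "u \<bullet> w = 0" "u \<bullet> n = 0" "w \<bullet> n = 0"
      using B(1,2) \<open>u \<in> B\<close> \<open>w \<in> B\<close> \<open>u \<noteq> n\<close> \<open>w \<noteq> n\<close> \<open>u \<noteq> w\<close>
      unfolding pairwise_def orthogonal_def by blast+
  qed
qed

lemma onb_perp_orthonormal:
  assumes "norm n = 1"
  shows "norm (fst (onb_perp n)) = 1" "norm (snd (onb_perp n)) = 1"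
    "fst (onb_perp n) \<bullet> snd (onb_perp n) = 0"
proof -
  have "\<exists>uw. norm (fst uw) = 1 \<and> norm (snd uw) = 1 \<and> fst uw \<bullet> snd uw = 0 \<and>
      fst uw \<bullet> n = 0 \<and> snd uw \<bullet> n = 0"
    using orthonormal_pair_orthogonal_to[OF assms] by (metis fst_conv snd_conv)
  from someI_ex[OF this] show "norm (fst (onb_perp n)) = 1" "norm (snd (onb_perp n)) = 1"
    "fst (onb_perp n) \<bullet> snd (onb_perp n) = 0"
    unfolding onb_perp_def by auto
qed

lemma integral_le_bound_mul_content:
  fixes g :: "'a::euclidean_space \<Rightarrow> real"
  assumes "S \<subseteq> cbox a b" and "0 \<le> c" and "\<And>x. x \<in> S \<Longrightarrow> g x \<le> c"
  shows "integral S g \<le> c * Henstock_Kurzweil_Integration.content (cbox a b)"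
proof (cases "g integrable_on S")
  case True
  have "integral S g = integral (cbox a b) (\<lambda>x. if x \<in> S then g x else 0)"
    using assms(1) by (simp add: integral_restrict_Int Int_absorb2)
  also have "\<dots> \<le> integral (cbox a b) (\<lambda>x. c)"
    using True assms(1-3) by (intro integral_le) (auto simp: integrable_restrict_Int Int_absorb2)
  finally show ?thesis by (simp add: mult.commute)
next
  case False
  then show ?thesis using assms(2) by (simp add: not_integrable_integral)
qed

lemma L2_plane_le:
  assumes n: "norm n = 1" and "0 \<le> K" and "0 \<le> R"
    and f: "\<And>X. X \<in> W \<Longrightarrow> \<bar>f X\<bar> \<le> K" and W: "\<And>X. X \<in> W \<Longrightarrow> norm (X - D) \<le> R"
  shows "L2_plane W D n f \<le> 2 * R * K"
proof -
  define u where "u = fst (onb_perp n)"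
  define w where "w = snd (onb_perp n)"
  have u: "u \<bullet> u = 1" "w \<bullet> u = 0" and w: "w \<bullet> w = 1" "u \<bullet> w = 0"
    using onb_perp_orthonormal[OF n] by (simp_all add: u_def w_def inner_commute flip: norm_eq_1)
  define Y where "Y st = D + fst st *\<^sub>R u + snd st *\<^sub>R w" for st :: "real \<times> real"
  have "\<bar>s\<bar> \<le> R \<and> \<bar>t\<bar> \<le> R" if "Y (s, t) \<in> W" for s t
  proof -
    have "(Y (s, t) - D) \<bullet> u = s" "(Y (s, t) - D) \<bullet> w = t"
      using u w by (simp_all add: Y_def inner_add_left)
    then show ?thesis
      using Cauchy_Schwarz_ineq2[of "Y (s, t) - D" u] Cauchy_Schwarz_ineq2[of "Y (s, t) - D" w]
        W[OF that] onb_perp_orthonormal[OF n] unfolding u_def[symmetric] w_def[symmetric] by auto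
  qed
  then have box: "{st. Y st \<in> W} \<subseteq> cbox (- R, - R) (R, R)"
    by (force simp: cbox_Pair_eq)
  have "integral {st. Y st \<in> W} (\<lambda>st. (f (Y st))\<^sup>2) \<le> K\<^sup>2 * Henstock_Kurzweil_Integration.content (cbox (- R, - R) (R, R))"
  proof (rule integral_le_bound_mul_content[OF box])
    show "(f (Y st))\<^sup>2 \<le> K\<^sup>2" if "st \<in> {st. Y st \<in> W}" for st
      using power_mono[OF f abs_ge_zero, of "Y st" 2] that by simp
  qed simp
  also have "\<dots> = (2 * R * K)\<^sup>2"
    using \<open>0 \<le> R\<close> by (simp add: content_Pair power2_eq_square)
  finally show ?thesis
    using \<open>0 \<le> K\<close> \<open>0 \<le> R\<close>
    unfolding L2_plane_def Let_def u_def[symmetric] w_def[symmetric] Y_def[symmetric]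
    by (simp add: real_le_lsqrt)
qed

text \<open>\<open>720 = 2 \<cdot> 6 \<cdot> 12 \<cdot> 5\<close>, the constants of \<open>L2_plane_le\<close>, \<open>patch_dist_le\<close>,
  \<open>trilinear_grad_inner_diff_le\<close> and \<open>mixed_partials_max_le_H2_semi\<close>.\<close>
lemma L2_plane_flux_jump_trilinear_le:
  assumes h: "0 < h" and A: "finite A" "a \<in> A" and D: "D \<in> ccell a h" and F: "F \<in> ccell a h"
    and n: "norm n = 1" and \<beta>: "0 < bm" "bm \<le> bp"
  shows "L2_plane (patch A h a) D n
      (\<lambda>X. bp * (grad (C_T bm bp F n D (trilinear k)) X \<bullet> n) - bm * (grad (trilinear k) X \<bullet> n))
    \<le> 720 * (bp - bm) * sqrt h * H2_semi (patch A h a) (trilinear k)"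
proof -
  define M where "M = mixed_partials_max k a h"
  have jump: "\<bar>bp * (grad (C_T bm bp F n D (trilinear k)) X \<bullet> n) - bm * (grad (trilinear k) X \<bullet> n)\<bar>
      \<le> 12 * h * M * (bp - bm)" if "X \<in> patch A h a" for X
  proof -
    have "\<bar>grad (trilinear k) X \<bullet> n - grad (trilinear k) F \<bullet> n\<bar> \<le> 12 * h * M"
      unfolding M_def using patch_component_bounds[OF that]
      by (intro trilinear_grad_inner_diff_le[OF h F _ n])
    then show ?thesis
      using \<beta> by (simp add: flux_jump_C_T[OF differentiable_trilinear n] abs_mult mult.commute mult_left_mono)
  qed
  have "L2_plane (patch A h a) D n
      (\<lambda>X. bp * (grad (C_T bm bp F n D (trilinear k)) X \<bullet> n) - bm * (grad (trilinear k) X \<bullet> n))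
      \<le> 2 * (6 * h) * (12 * h * M * (bp - bm))"
    using h \<beta> mixed_partials_max_nonneg[of k a h] unfolding M_def[symmetric]
    by (intro L2_plane_le[OF n _ _ jump patch_dist_le[OF _ D]]) auto
  also have "\<dots> = 144 * (bp - bm) * (h\<^sup>2 * M)" by (simp add: power2_eq_square)
  also have "\<dots> \<le> 144 * (bp - bm) * (5 * sqrt h * H2_semi (patch A h a) (trilinear k))"
    unfolding M_def using h \<beta>
    by (intro mult_left_mono mixed_partials_max_le_H2_semi[OF h compact_patch[OF A(1)]]
        ccell_subset_patch[OF A(2)]) auto
  finally show ?thesis by (simp add: algebra_simps)
qed

lemma L2_plane_flux_jump_le:
  assumes mesh: "cartesian_mesh \<Omega> h org A" and a: "a \<in> A" and K: "K_select \<Gamma> Om a h S"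
    and D: "D \<in> S" and n: "norm n = 1" and \<beta>: "0 < bm" "bm \<le> bp" and p: "p \<in> Q1"
  shows "L2_plane (patch A h a) D n
      (\<lambda>X. bp * (grad (C_T bm bp ((1/3) *\<^sub>R sum id S) n D p) X \<bullet> n) - bm * (grad p X \<bullet> n))
    \<le> 720 * (bp - bm) * sqrt h * H2_semi (patch A h a) p"
proof -
  have h: "0 < h" and A: "finite A" using mesh by (auto simp: cartesian_mesh_def)
  have S: "card S = 3" "S \<subseteq> ccell a h"
    using K cut_points_subset_ccell[of h] h unfolding K_select_def Let_def by auto
  then have "(1/3) *\<^sub>R sum id S \<in> ccell a h"
    using centroid_mem_convex[of "ccell a h" S] by (force simp: ccell_def)
  moreover obtain k where "p = trilinear k" using Q1_trilinear[OF p] .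
  ultimately show ?thesis
    using L2_plane_flux_jump_trilinear_le[OF h A a _ _ n \<beta>] D S(2) by blast
qed

theorem lemma4p5:
  fixes \<Omega> :: "(real^3) set"
  assumes "open \<Omega>" and "connected \<Omega>"
    and "\<exists>B :: ((real^3) \<times> (real^3)) set. finite B \<and> \<Omega> = interior (\<Union>(u, w)\<in>B. cbox u w)"
  shows "\<exists>C::real. \<forall>h org A \<Gamma> Om Op bm bp a S n D p.
     cartesian_mesh \<Omega> h org A \<and> interface \<Omega> \<Gamma> Om Op \<and> mesh_interface_ok \<Gamma> h A \<and>
     (\<exists>r. reach_ok \<Gamma> Om Op r \<and> 3 * sqrt 3 * h < r) \<and>
     0 < bm \<and> bm \<le> bp \<and>
     a \<in> A \<and> \<Gamma> \<inter> cell a h \<noteq> {} \<and>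
     K_select \<Gamma> Om a h S \<and> D \<in> S \<and> norm n = 1 \<and> (\<forall>x\<in>S. \<forall>y\<in>S. (x - y) \<bullet> n = 0) \<and>
     p \<in> Q1
     \<longrightarrow>
     (let W = patch A h a; F = (1/3) *\<^sub>R sum id S;
          vm = p; vp = C_T bm bp F n D p;
          jump = (\<lambda>X. bp * (grad vp X \<bullet> n) - bm * (grad vm X \<bullet> n))
      in L2_plane W D n jump \<le> C * (bp - bm) * sqrt h * H2_semi W vp \<and>
         L2_plane W D n jump \<le> C * (bp - bm) * sqrt h * H2_semi W vm)"
  by (intro exI[of _ 720] allI impI, unfold Let_def, elim conjE)
    (simp only: H2_semi_C_T differentiable_Q1 L2_plane_flux_jump_le simp_thms)

end
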